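(* Let $R$ be a System F type with $\mathrm{FV}(R)=\{X\}$ and $X\in^+ R$, and let $\gamma$ be any environment. Then for all terms $t,t'$: (i) $t\,\llbracket D_{\mathrm{ind}}\subseteq D_{\mathrm{param}}\rrbracket_\gamma\,t'$; (ii) if $R$ is $\forall^+$, then $t\,\llbracket D_{\mathrm{param}}\subseteq D_{\mathrm{ind}}\rrbracket_\gamma\,t'$; (iii) if $R$ is $\forall^+$, then $t\,\llbracket D_{\mathrm{ind}}\simeq D_{\mathrm{param}}\rrbracket_\gamma\,t'$.
   Context: Terms are those of the pure untyped $\lambda$-calculus, $t ::= x \mid \lambda x.t \mid t\,t'$, up to $\alpha$-equivalence; $=_{\beta\eta}$ is $\beta\eta$-convertibility. Relational types: $R ::= X \mid R\to R' \mid \forall X.R \mid R^{\cup} \mid R\cdot R' \mid t$ (the last is promotion of a term to a type); System F types are those built only from type variables, $\to$ and $\forall$. A relation $r$ on terms is $\beta\eta$-closed if $t_1\,r\,t_2$, $t_1'=_{\beta\eta}t_1$, $t_2'=_{\beta\eta}t_2$ imply $t_1'\,r\,t_2'$; $\mathcal{R}$ is the set of such relations. An environment $\gamma$ maps type variables to $\mathcal{R}$. Interpretation: $\llbracket X\rrbracket_\gamma=\gamma(X)$; $t\,\llbracket R\to R'\rrbracket_\gamma\,t'$ iff $a\,\llbracket R\rrbracket_\gamma\,a'$ implies $t\,a\,\llbracket R'\rrbracket_\gamma\,t'\,a'$ for all $a,a'$; $\llbracket \forall X.R\rrbracket_\gamma=\bigcap_{r\in\mathcal{R}}\llbracket R\rrbracket_{\gamma[X\mapsto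 r]}$; $t\,\llbracket R^\cup\rrbracket_\gamma\,t'$ iff $t'\,\llbracket R\rrbracket_\gamma\,t$; $t\,\llbracket R\cdot R'\rrbracket_\gamma\,t'$ iff $\exists t''$, $t\,\llbracket R\rrbracket_\gamma\,t''$ and $t''\,\llbracket R'\rrbracket_\gamma\,t'$; $\llbracket \hat t\rrbracket_\gamma=\{(t,t')\mid \hat t\,t=_{\beta\eta}t'\}$. Term abbreviations: $I:=\lambda x.x$, $K:=\lambda x.\lambda y.x$, $t\circ t':=\lambda x.t\,(t'\,x)$. Type abbreviations: $[t]R:=(K\,t)\cdot R$; $R[t]:=R\cdot (K\,t)^\cup$; $t\bullet R := t\cdot R\cdot t^\cup$; $R\subseteq R' := (K\,I)\bullet(R\to R')$; $R\Rightarrow R' := K\bullet (R\to R')$; $R\simeq R' := (R\subseteq R')\cdot(R'\subseteq R)$. Polarities $p\in\{+,-\}$, $\bar p$ the other. $X\in^p R$ is defined by: $X\in^+X$; $X\in^p Y$ for type variables $Y\neq X$; $X\in^p(R\to R')$ iff $X\in^{\bar p}R$ and $X\in^p R'$; $X\in^p\forall Y.R$ iff $X\in^p R$; $X\in^p (R\cdot R')$ iff $X\in^pR$ and $X\in^pR'$; $X\in^p R^\cup$ iff $X\in^p R$; $X\in^p t$ for promoted terms. The property $\forall^p$: type variables are $\forall^p$; if $R$ is $\forall^{\bar p}$ and $R'$ is $\forall^p$ then $R\to R'$ is $\forall^p$; if $R$ is $\forall^+$ then $\forall X.R$ is $\forall^+$; if $R$ is $\forall^p$ so is $R^\cup$;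 a promotion of $t=_{\beta\eta}I$ is $\forall^p$. For System F types define $\mathit{fmap}_{X,R}$ by recursion: $\mathit{fmap}_{X,X}=I$; $\mathit{fmap}_{X,Y}=K\,I$ ($Y\ne X$); $\mathit{fmap}_{X,R\to R'}=\lambda f.\lambda a.\,\mathit{fmap}_{X,R'}\,f\circ a\circ \mathit{fmap}_{X,R}\,f$; $\mathit{fmap}_{X,\forall Y.R}=\lambda f.\,\mathit{fmap}_{X,R}\,f$ (bound variable renamed to differ from $X$). Let $\mathit{fold}:=\lambda a.\lambda x.x\,a$ and $\mathit{in}_{X,R}:=\lambda x.\lambda a.\,a\,(\mathit{fmap}_{X,R}\,(\mathit{fold}\,a)\,x)$. Define $D_{\mathrm{param}}:=\forall X.(R\to X)\to X$ and $D_{\mathrm{ind}}:=\forall X.\big([\mathit{in}_{X,R}]\,(R\to X)\,[\mathit{in}_{X,R}]\big)\Rightarrow X$. *)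

theory Defs
  imports Main
begin

section \<open>Untyped lambda terms (de Bruijn indices, so alpha-equivalence is equality)\<close>

datatype dB = Var nat | App dB dB | Abs dB

primrec lift :: "dB \<Rightarrow> nat \<Rightarrow> dB" where
  "lift (Var i) k = (if i < k then Var i else Var (Suc i))"
| "lift (App s t) k = App (lift s k) (lift t k)"
| "lift (Abs s) k = Abs (lift s (Suc k))"

primrec subst :: "dB \<Rightarrow> dB \<Rightarrow> nat \<Rightarrow> dB" where
  "subst (Var i) s k = (if k < i then Var (i - 1) else if i = k then s else Var i)"
| "subst (App t u) s k = App (subst t s k) (subst u s k)"
| "subst (Abs t) s k = Abs (subst t (lift s 0) (Suc k))"

inductive beta_eta :: "dB \<Rightarrow> dB \<Rightarrow> bool" where
  beta: "beta_eta (App (Abs s) t) (subst s t 0)"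
| eta: "beta_eta (Abs (App (lift s 0) (Var 0))) s"
| appL: "beta_eta s t \<Longrightarrow> beta_eta (App s u) (App t u)"
| appR: "beta_eta s t \<Longrightarrow> beta_eta (App u s) (App u t)"
| abs: "beta_eta s t \<Longrightarrow> beta_eta (Abs s) (Abs t)"

definition conv :: "dB \<Rightarrow> dB \<Rightarrow> bool" where
  "conv = equivclp beta_eta"

definition be_closed :: "(dB \<Rightarrow> dB \<Rightarrow> bool) \<Rightarrow> bool" where
  "be_closed r \<longleftrightarrow> (\<forall>t1 t2 t1' t2'. r t1 t2 \<longrightarrow> conv t1' t1 \<longrightarrow> conv t2' t2 \<longrightarrow> r t1' t2')"

definition I_t :: dB where "I_t = Abs (Var 0)"
definition K_t :: dB where "K_t = Abs (Abs (Var 1))"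

definition comp_t :: "dB \<Rightarrow> dB \<Rightarrow> dB" where
  "comp_t t t' = Abs (App (lift t 0) (App (lift t' 0) (Var 0)))"

definition fold_t :: dB where "fold_t = Abs (Abs (App (Var 0) (Var 1)))"

type_synonym tyvar = nat

datatype rtype = TVar tyvar | Arr rtype rtype | All tyvar rtype | Conv rtype
  | Comp rtype rtype | Prom dB

primrec fv :: "rtype \<Rightarrow> tyvar set" where
  "fv (TVar Y) = {Y}"
| "fv (Arr R R') = fv R \<union> fv R'"
| "fv (All Y R) = fv R - {Y}"
| "fv (Conv R) = fv R"
| "fv (Comp R R') = fv R \<union> fv R'"
| "fv (Prom t) = {}"

primrec systemF :: "rtype \<Rightarrow> bool" where
  "systemF (TVar Y) = True"
| "systemF (Arr R R') = (systemF R \<and> systemF R')"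
| "systemF (All Y R) = systemF R"
| "systemF (Conv R) = False"
| "systemF (Comp R R') = False"
| "systemF (Prom t) = False"

primrec interp :: "(tyvar \<Rightarrow> dB \<Rightarrow> dB \<Rightarrow> bool) \<Rightarrow> rtype \<Rightarrow> dB \<Rightarrow> dB \<Rightarrow> bool" where
  "interp \<gamma> (TVar X) = \<gamma> X"
| "interp \<gamma> (Arr R R') = (\<lambda>t t'. \<forall>a a'. interp \<gamma> R a a' \<longrightarrow> interp \<gamma> R' (App t a) (App t' a'))"
| "interp \<gamma> (All X R) = (\<lambda>t t'. \<forall>r. be_closed r \<longrightarrow> interp (\<gamma>(X := r)) R t t')"
| "interp \<gamma> (Conv R) = (\<lambda>t t'. interp \<gamma> R t' t)"
| "interp \<gamma> (Comp R R') = (\<lambda>t t'. \<exists>t''. interp \<gamma> R t t'' \<and> interp \<gamma> R' t'' t')"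
| "interp \<gamma> (Prom u) = (\<lambda>t t'. conv (App u t) t')"

definition lbr :: "dB \<Rightarrow> rtype \<Rightarrow> rtype" where "lbr t R = Comp (Prom (App K_t t)) R"
definition rbr :: "rtype \<Rightarrow> dB \<Rightarrow> rtype" where "rbr R t = Comp R (Conv (Prom (App K_t t)))"
definition bullet :: "dB \<Rightarrow> rtype \<Rightarrow> rtype" where "bullet t R = Comp (Comp (Prom t) R) (Conv (Prom t))"
definition Sub :: "rtype \<Rightarrow> rtype \<Rightarrow> rtype" where "Sub R R' = bullet (App K_t I_t) (Arr R R')"
definition Imp :: "rtype \<Rightarrow> rtype \<Rightarrow> rtype" where "Imp R R' = bullet K_t (Arr R R')"
definition Simeq :: "rtype \<Rightarrow> rtype \<Rightarrow> rtype" where "Simeq R R' = Comp (Sub R R') (Sub R' R)"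

section \<open>Polarity and the forall^p property (polarity True = +, False = -)\<close>

text \<open>Types are taken up to alpha-equivalence: a bound variable equal to X is renamed
  away, so X occurs vacuously (with every polarity) under a binder for X.\<close>
primrec occ :: "bool \<Rightarrow> tyvar \<Rightarrow> rtype \<Rightarrow> bool" where
  "occ p X (TVar Y) = (Y \<noteq> X \<or> p)"
| "occ p X (Arr R R') = (occ (\<not> p) X R \<and> occ p X R')"
| "occ p X (All Y R) = (Y = X \<or> occ p X R)"
| "occ p X (Conv R) = occ p X R"
| "occ p X (Comp R R') = (occ p X R \<and> occ p X R')"
| "occ p X (Prom t) = True"

primrec forallp :: "bool \<Rightarrow> rtype \<Rightarrow> bool" where
  "forallp p (TVar Y) = True"
| "forallp p (Arr R R') = (forallp (\<not> p) R \<and> forallp p R')"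
| "forallp p (All Y R) = (p \<and> forallp True R)"
| "forallp p (Conv R) = forallp p R"
| "forallp p (Comp R R') = False"
| "forallp p (Prom t) = conv t I_t"

text \<open>fmapv P R: P says which type variables denote X (those not shadowed by a binder);
  the clause for \<forall>Y renames the bound Y apart from X, i.e. occurrences of Y no longer denote X.\<close>
primrec fmapv :: "(tyvar \<Rightarrow> bool) \<Rightarrow> rtype \<Rightarrow> dB" where
  "fmapv P (TVar Y) = (if P Y then I_t else App K_t I_t)"
| "fmapv P (Arr R R') =
     Abs (Abs (comp_t (App (lift (lift (fmapv P R') 0) 0) (Var 1))
                      (comp_t (Var 0) (App (lift (lift (fmapv P R) 0) 0) (Var 1)))))"
| "fmapv P (All Y R) = Abs (App (lift (fmapv (P(Y := False)) R) 0) (Var 0))"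
| "fmapv P (Conv R) = undefined"
| "fmapv P (Comp R R') = undefined"
| "fmapv P (Prom t) = undefined"

definition fmap :: "tyvar \<Rightarrow> rtype \<Rightarrow> dB" where
  "fmap X R = fmapv (\<lambda>Y. Y = X) R"

text \<open>in = \<lambda>x.\<lambda>a. a (fmap (fold a) x)\<close>
definition in_t :: "tyvar \<Rightarrow> rtype \<Rightarrow> dB" where
  "in_t X R = Abs (Abs (App (Var 0)
      (App (App (lift (lift (fmap X R) 0) 0) (App fold_t (Var 0))) (Var 1))))"

definition Dparam :: "tyvar \<Rightarrow> rtype \<Rightarrow> rtype" where
  "Dparam X R = All X (Arr (Arr R (TVar X)) (TVar X))"

definition Dind :: "tyvar \<Rightarrow> rtype \<Rightarrow> rtype" where
  "Dind X R = All X (Imp (rbr (lbr (in_t X R) (Arr R (TVar X))) (in_t X R)) (TVar X))"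

end

theory Submission
  imports Defs
begin

(* For (i), instantiate D_ind at the relation r' = {(u, u') | r (u f) (u' f')}, where f, f' are
   r-related R-algebras.  Because in a f = f (fmap (fold f) a), the relational action of fmap on the
   positive variable X makes in an r'-algebra, so t and t' are r'-related, i.e. t f r t' f'.
   For (ii), identity extension says that a forall^+ type whose free variables all denote
   beta-eta-convertibility is contained in convertibility.  Applied to D_param it gives t = t';
   applied to R, with D_param instantiated at the graph of (- f), it gives t in f = t' f, hence
   t in = t' by extensionality.  Any algebra condition on in then relates t in and t' in, and so
   t and t'. *)

lemma lift_lift: "i < k + 1 \<Longrightarrow> lift (lift t i) (Suc k) = lift (lift t k) i"
  by (induct t arbitrary: i k) auto

lemma lift_subst [simp]: "j < i + 1 \<Longrightarrow> lift (subst t s j) i = subst (lift t (i + 1)) (lift s i) j"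
  by (induct t arbitrary: i j s) (simp_all add: diff_Suc lift_lift split: nat.split)

lemma lift_subst_lt: "i < j + 1 \<Longrightarrow> lift (subst t s j) i = subst (lift t i) (lift s i) (j + 1)"
  by (induct t arbitrary: i j s) (auto simp: lift_lift)

lemma subst_lift [simp]: "subst (lift t k) s k = t"
  by (induct t arbitrary: k s) simp_all

lemma subst_subst:
  "i < j + 1 \<Longrightarrow> subst (subst t (lift v i) (Suc j)) (subst u v j) i = subst (subst t u i) v j"
  by (induct t arbitrary: i j u v)
    (simp_all add: diff_Suc lift_lift [symmetric] lift_subst_lt split: nat.split)

primrec loose_below :: "nat \<Rightarrow> dB \<Rightarrow> bool" where
  "loose_below k (Var i) = (i < k)"
| "loose_below k (App s t) = (loose_below k s \<and> loose_below k t)"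
| "loose_below k (Abs s) = loose_below (Suc k) s"

lemma loose_below_mono: "loose_below k t \<Longrightarrow> k \<le> k' \<Longrightarrow> loose_below k' t"
  by (induct t arbitrary: k k') auto

lemma loose_below_ex: "\<exists>k. loose_below k t"
proof (induct t)
  case (Var i)
  show ?case by (rule exI[of _ "Suc i"]) simp
next
  case (App s t)
  then obtain k1 k2 where "loose_below k1 s" "loose_below k2 t" by blast
  then show ?case by (intro exI[of _ "max k1 k2"]) (auto intro: loose_below_mono)
next
  case (Abs s)
  then obtain k where "loose_below k s" by blast
  then show ?case by (intro exI[of _ k]) (auto intro: loose_below_mono)
qed

lemma loose_below_lift: "loose_below k t \<Longrightarrow> loose_below (Suc k) (lift t j)"
  by (induct t arbitrary: k j) auto

lemma lift_loose_below: "loose_below k t \<Longrightarrow> k \<le> j \<Longrightarrow> lift t j = t"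
  by (induct t arbitrary: k j) auto

lemma subst_loose_below: "loose_below k t \<Longrightarrow> k \<le> j \<Longrightarrow> subst t s j = t"
  by (induct t arbitrary: k j s) auto

lemma lift_closed [simp]: "loose_below 0 t \<Longrightarrow> lift t j = t"
  using lift_loose_below by blast

lemma subst_closed [simp]: "loose_below 0 t \<Longrightarrow> subst t s j = t"
  using subst_loose_below by blast

lemma closed_loose_below [simp]: "loose_below 0 t \<Longrightarrow> loose_below k t"
  using loose_below_mono by blast

lemma lift_preserves_beta_eta: "beta_eta s t \<Longrightarrow> beta_eta (lift s k) (lift t k)"
proof (induct arbitrary: k rule: beta_eta.induct)
  case (beta s t)
  then show ?case by (simp add: beta_eta.beta)
next
  case (eta s)
  then show ?case using beta_eta.eta[of "lift s k"] by (simp add: lift_lift)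
qed (auto intro: beta_eta.intros)

lemma subst_preserves_beta_eta: "beta_eta s t \<Longrightarrow> beta_eta (subst s u k) (subst t u k)"
proof (induct arbitrary: u k rule: beta_eta.induct)
  case (beta s t)
  then show ?case using beta_eta.beta[of "subst s (lift u 0) (Suc k)" "subst t u k"]
    by (simp add: subst_subst[where i=0, simplified])
next
  case (eta s)
  then show ?case using beta_eta.eta[of "subst s u k"]
    by (simp add: lift_subst_lt[where i=0, simplified])
qed (auto intro: beta_eta.intros)

lemma equivclp_map:
  assumes "\<And>x y. r x y \<Longrightarrow> s (f x) (f y)" and "equivclp r x y"
  shows "equivclp s (f x) (f y)"
  using assms(2)
proof (induct rule: equivclp_induct)
  case base
  then show ?case by simp
next
  case (step y z)
  then show ?case using assms(1) by (meson equivclp_into_equivclp)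
qed

lemma conv_refl [simp]: "conv x x"
  by (simp add: conv_def)

lemma conv_sym [sym]: "conv x y \<Longrightarrow> conv y x"
  unfolding conv_def by (rule equivclp_sym)

lemma conv_trans [trans]: "conv x y \<Longrightarrow> conv y z \<Longrightarrow> conv x z"
  unfolding conv_def by (rule equivclp_trans)

lemma beta_eta_into_conv: "beta_eta x y \<Longrightarrow> conv x y"
  unfolding conv_def by blast

lemma conv_map:
  "(\<And>x y. beta_eta x y \<Longrightarrow> beta_eta (f x) (f y)) \<Longrightarrow> conv x y \<Longrightarrow> conv (f x) (f y)"
  unfolding conv_def by (rule equivclp_map)

lemma conv_appL: "conv s t \<Longrightarrow> conv (App s u) (App t u)"
  by (rule conv_map[where f="\<lambda>x. App x u"]) (auto intro: beta_eta.intros)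

lemma conv_appR: "conv s t \<Longrightarrow> conv (App u s) (App u t)"
  by (rule conv_map[where f="\<lambda>x. App u x"]) (auto intro: beta_eta.intros)

lemma conv_app: "conv s t \<Longrightarrow> conv u v \<Longrightarrow> conv (App s u) (App t v)"
  by (meson conv_appL conv_appR conv_trans)

lemma conv_abs: "conv s t \<Longrightarrow> conv (Abs s) (Abs t)"
  by (rule conv_map) (auto intro: beta_eta.intros)

lemma conv_lift: "conv s t \<Longrightarrow> conv (lift s k) (lift t k)"
  by (rule conv_map) (auto intro: lift_preserves_beta_eta)

lemma conv_subst: "conv s t \<Longrightarrow> conv (subst s u k) (subst t u k)"
  by (rule conv_map[where f="\<lambda>x. subst x u k"]) (auto intro: subst_preserves_beta_eta)

lemma conv_eta: "conv (Abs (App (lift s 0) (Var 0))) s"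
  by (rule beta_eta_into_conv) (rule beta_eta.eta)

lemma conv_beta: "subst s t 0 = u \<Longrightarrow> conv (App (Abs s) t) u"
  using beta_eta.beta beta_eta_into_conv by blast

lemma conv_beta2:
  assumes "subst (subst s (lift t 0) (Suc 0)) u 0 = v"
  shows "conv (App (App (Abs (Abs s)) t) u) v"
proof -
  have "conv (App (App (Abs (Abs s)) t) u) (App (Abs (subst s (lift t 0) (Suc 0))) u)"
    by (intro conv_appL conv_beta) simp
  also have "conv \<dots> v"
    using assms by (rule conv_beta)
  finally show ?thesis .
qed

(* Apply both sides to a variable fresh for them, then eta-contract. *)
lemma conv_ext:
  assumes "\<And>x. conv (App h x) (App h' x)"
  shows "conv h h'"
proof -
  obtain k1 k2 where "loose_below k1 h" "loose_below k2 h'"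
    using loose_below_ex by blast
  then have fresh: "loose_below (max k1 k2) h" "loose_below (max k1 k2) h'"
    by (auto intro: loose_below_mono)
  let ?k = "max k1 k2"
  have "conv (subst (lift (App h (Var ?k)) 0) (Var 0) (Suc ?k))
             (subst (lift (App h' (Var ?k)) 0) (Var 0) (Suc ?k))"
    using assms by (intro conv_subst conv_lift)
  moreover have "subst (lift h 0) (Var 0) (Suc ?k) = lift h 0"
    "subst (lift h' 0) (Var 0) (Suc ?k) = lift h' 0"
    using fresh loose_below_lift subst_loose_below by blast+
  ultimately have "conv (Abs (App (lift h 0) (Var 0))) (Abs (App (lift h' 0) (Var 0)))"
    by (simp add: conv_abs)
  then show ?thesis
    by (meson conv_eta conv_sym conv_trans)
qed

lemma closed_I [simp]: "loose_below 0 I_t"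
  and closed_K [simp]: "loose_below 0 K_t"
  and closed_fold [simp]: "loose_below 0 fold_t"
  by (simp_all add: I_t_def K_t_def fold_t_def)

lemma conv_I: "conv (App I_t u) u"
  unfolding I_t_def by (rule conv_beta) simp

lemma conv_K: "conv (App (App K_t u) v) u"
  unfolding K_t_def by (rule conv_beta2) simp

lemma conv_KI: "conv (App (App (App K_t I_t) u) a) a"
  by (meson conv_K conv_I conv_appL conv_trans)

lemma conv_fold: "conv (App (App fold_t f) x) (App x f)"
  unfolding fold_t_def by (rule conv_beta2) simp

lemma subst_comp_t [simp]: "subst (comp_t t t') s k = comp_t (subst t s k) (subst t' s k)"
  by (simp add: comp_t_def lift_subst_lt[where i=0, simplified])

lemma conv_comp_t: "conv (App (comp_t t t') x) (App t (App t' x))"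
  unfolding comp_t_def by (rule conv_beta) simp

lemma be_closedD: "be_closed r \<Longrightarrow> r t1 t2 \<Longrightarrow> conv t1' t1 \<Longrightarrow> conv t2' t2 \<Longrightarrow> r t1' t2'"
  unfolding be_closed_def by blast

lemma be_closed_conv: "be_closed conv"
  unfolding be_closed_def by (meson conv_sym conv_trans)

lemma be_closed_interp: "\<forall>Y. be_closed (\<gamma> Y) \<Longrightarrow> be_closed (interp \<gamma> R)"
proof (induct R arbitrary: \<gamma>)
  case (Arr R1 R2)
  then have "be_closed (interp \<gamma> R2)" by blast
  then show ?case
    unfolding be_closed_def interp.simps by (meson conv_appL)
next
  case (All Y R)
  then have "\<And>r. be_closed r \<Longrightarrow> be_closed (interp (\<gamma>(Y := r)) R)" by simp
  then show ?case unfolding be_closed_def interp.simps by blast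
next
  case (Comp R1 R2)
  then have "be_closed (interp \<gamma> R1)" "be_closed (interp \<gamma> R2)" by blast+
  then show ?case unfolding be_closed_def interp.simps by (meson conv_refl)
next
  case (Prom u)
  show ?case unfolding be_closed_def interp.simps by (meson conv_appR conv_sym conv_trans)
qed (auto simp: be_closed_def)

lemma interp_cong: "\<forall>Y\<in>fv R. \<gamma>1 Y = \<gamma>2 Y \<Longrightarrow> interp \<gamma>1 R = interp \<gamma>2 R"
proof (induct R arbitrary: \<gamma>1 \<gamma>2)
  case (Arr R1 R2)
  then have "interp \<gamma>1 R1 = interp \<gamma>2 R1" "interp \<gamma>1 R2 = interp \<gamma>2 R2" by simp_all
  then show ?case by simp
next
  case (All Y R)
  then have "\<And>r. interp (\<gamma>1(Y := r)) R = interp (\<gamma>2(Y := r)) R" by simp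
  then show ?case by simp
next
  case (Conv R)
  then have "interp \<gamma>1 R = interp \<gamma>2 R" by simp
  then show ?case by simp
next
  case (Comp R1 R2)
  then have "interp \<gamma>1 R1 = interp \<gamma>2 R1" "interp \<gamma>1 R2 = interp \<gamma>2 R2" by simp_all
  then show ?case by simp
qed simp_all

definition arrow_rel :: "(dB \<Rightarrow> dB \<Rightarrow> bool) \<Rightarrow> (dB \<Rightarrow> dB \<Rightarrow> bool) \<Rightarrow> dB \<Rightarrow> dB \<Rightarrow> bool" where
  "arrow_rel A B t t' \<longleftrightarrow> (\<forall>a a'. A a a' \<longrightarrow> B (App t a) (App t' a'))"

lemma arrow_relI: "(\<And>a a'. A a a' \<Longrightarrow> B (App t a) (App t' a')) \<Longrightarrow> arrow_rel A B t t'"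
  by (simp add: arrow_rel_def)

lemma arrow_relD: "arrow_rel A B t t' \<Longrightarrow> A a a' \<Longrightarrow> B (App t a) (App t' a')"
  by (simp add: arrow_rel_def)

lemma interp_Arr: "interp \<gamma> (Arr R R') = arrow_rel (interp \<gamma> R) (interp \<gamma> R')"
  by (simp add: arrow_rel_def fun_eq_iff)

lemma interp_Sub:
  assumes "\<forall>Y. be_closed (\<gamma> Y)"
  shows "interp \<gamma> (Sub A B) t t' \<longleftrightarrow> interp \<gamma> A \<le> interp \<gamma> B"
proof
  assume "interp \<gamma> (Sub A B) t t'"
  then obtain s s' where s: "conv (App (App K_t I_t) t) s" "interp \<gamma> (Arr A B) s s'"
    "conv (App (App K_t I_t) t') s'"
    by (auto simp: Sub_def bullet_def)
  show "interp \<gamma> A \<le> interp \<gamma> B"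
  proof (rule predicate2I)
    fix a a'
    assume "interp \<gamma> A a a'"
    then have "interp \<gamma> B (App s a) (App s' a')" using s by simp
    moreover have "conv a (App s a)" "conv a' (App s' a')"
      using s by (meson conv_KI conv_appL conv_sym conv_trans)+
    ultimately show "interp \<gamma> B a a'"
      using be_closedD[OF be_closed_interp[OF assms]] by blast
  qed
next
  assume le: "interp \<gamma> A \<le> interp \<gamma> B"
  have "interp \<gamma> (Arr A B) (App (App K_t I_t) t) (App (App K_t I_t) t')"
    using le be_closedD[OF be_closed_interp[OF assms]] conv_KI by auto
  then show "interp \<gamma> (Sub A B) t t'"
    unfolding Sub_def bullet_def interp.simps by (meson conv_refl)
qed

lemma interp_Imp:
  assumes "\<forall>Y. be_closed (\<gamma> Y)"
  shows "interp \<gamma> (Imp A B) t t' \<longleftrightarrow> ((\<exists>a a'. interp \<gamma> A a a') \<longrightarrow> interp \<gamma> B t t')"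
proof
  assume "interp \<gamma> (Imp A B) t t'"
  then obtain s s' where s: "conv (App K_t t) s" "interp \<gamma> (Arr A B) s s'" "conv (App K_t t') s'"
    by (auto simp: Imp_def bullet_def)
  show "(\<exists>a a'. interp \<gamma> A a a') \<longrightarrow> interp \<gamma> B t t'"
  proof (intro impI, elim exE)
    fix a a'
    assume "interp \<gamma> A a a'"
    then have "interp \<gamma> B (App s a) (App s' a')" using s by simp
    moreover have "conv t (App s a)" "conv t' (App s' a')"
      using s by (meson conv_K conv_appL conv_sym conv_trans)+
    ultimately show "interp \<gamma> B t t'"
      using be_closedD[OF be_closed_interp[OF assms]] by blast
  qed
next
  assume "(\<exists>a a'. interp \<gamma> A a a') \<longrightarrow> interp \<gamma> B t t'"
  then have "interp \<gamma> (Arr A B) (App K_t t) (App K_t t')"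
    using be_closedD[OF be_closed_interp[OF assms]] conv_K by auto
  then show "interp \<gamma> (Imp A B) t t'"
    unfolding Imp_def bullet_def interp.simps by (meson conv_refl)
qed

lemma interp_brackets:
  assumes "\<forall>Y. be_closed (\<gamma> Y)"
  shows "interp \<gamma> (rbr (lbr u B) u) a a' \<longleftrightarrow> interp \<gamma> B u u"
proof
  assume "interp \<gamma> (rbr (lbr u B) u) a a'"
  then obtain s s' where "conv (App (App K_t u) a) s" "interp \<gamma> B s s'" "conv (App (App K_t u) a') s'"
    by (auto simp: rbr_def lbr_def)
  then show "interp \<gamma> B u u"
    using be_closedD[OF be_closed_interp[OF assms]] by (meson conv_K conv_sym conv_trans)
next
  assume "interp \<gamma> B u u"
  then have "interp \<gamma> B (App (App K_t u) a) (App (App K_t u) a')"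
    using be_closedD[OF be_closed_interp[OF assms]] conv_K by blast
  then show "interp \<gamma> (rbr (lbr u B) u) a a'"
    unfolding rbr_def lbr_def interp.simps by (meson conv_refl)
qed

lemma interp_Dind:
  assumes "\<forall>Y. be_closed (\<gamma> Y)"
  shows "interp \<gamma> (Dind X R) t t' \<longleftrightarrow>
    (\<forall>r. be_closed r \<longrightarrow> interp (\<gamma>(X := r)) (Arr R (TVar X)) (in_t X R) (in_t X R) \<longrightarrow> r t t')"
  using assms by (simp add: Dind_def interp_Imp interp_brackets)

lemma interp_Dparam:
  "interp \<gamma> (Dparam X R) t t' \<longleftrightarrow>
    (\<forall>r. be_closed r \<longrightarrow> (\<forall>f f'. interp (\<gamma>(X := r)) (Arr R (TVar X)) f f' \<longrightarrow> r (App t f) (App t' f')))"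
  by (simp add: Dparam_def)

section \<open>Identity extension\<close>

lemma identity_extension:
  assumes "\<forall>Y\<in>fv R. \<gamma> Y = conv"
  shows "(forallp True R \<longrightarrow> interp \<gamma> R \<le> conv) \<and> (forallp False R \<longrightarrow> conv \<le> interp \<gamma> R)"
  using assms
proof (induct R arbitrary: \<gamma>)
  case (Arr R1 R2)
  then have IH1: "forallp True R1 \<Longrightarrow> interp \<gamma> R1 \<le> conv" "forallp False R1 \<Longrightarrow> conv \<le> interp \<gamma> R1"
    and IH2: "forallp True R2 \<Longrightarrow> interp \<gamma> R2 \<le> conv" "forallp False R2 \<Longrightarrow> conv \<le> interp \<gamma> R2"
    by simp_all
  have "interp \<gamma> (Arr R1 R2) \<le> conv" if "forallp False R1" "forallp True R2"
  proof (rule predicate2I)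
    fix t t'
    assume tt: "interp \<gamma> (Arr R1 R2) t t'"
    show "conv t t'"
    proof (rule conv_ext)
      fix x
      have "interp \<gamma> R1 x x"
        using IH1(2)[OF that(1)] by (simp add: le_fun_def)
      then have "interp \<gamma> R2 (App t x) (App t' x)"
        using tt by simp
      then show "conv (App t x) (App t' x)"
        using IH2(1)[OF that(2)] by (simp add: le_fun_def)
    qed
  qed
  moreover have "conv \<le> interp \<gamma> (Arr R1 R2)" if "forallp True R1" "forallp False R2"
  proof (rule predicate2I)
    fix t t'
    assume "conv t t'"
    then show "interp \<gamma> (Arr R1 R2) t t'"
      using IH1(1)[OF that(1)] IH2(2)[OF that(2)] by (simp add: le_fun_def conv_app)
  qed
  ultimately show ?case by simp
next
  case (All Y R)
  have "interp (\<gamma>(Y := conv)) R \<le> conv" if "forallp True R"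
    using All that by simp
  then have "interp \<gamma> (All Y R) \<le> conv" if "forallp True R"
    using that be_closed_conv by (simp add: le_fun_def)
  then show ?case by simp
next
  case (Conv R)
  then have "forallp True R \<Longrightarrow> interp \<gamma> R \<le> conv" "forallp False R \<Longrightarrow> conv \<le> interp \<gamma> R"
    by simp_all
  then show ?case
    unfolding le_fun_def le_bool_def by (simp add: conv_sym)
next
  case (Prom u)
  have "conv (App u a) a' \<longleftrightarrow> conv a a'" if "conv u I_t" for a a'
    using that by (meson conv_I conv_appL conv_sym conv_trans)
  then show ?case by (simp add: le_fun_def)
qed simp_all

section \<open>The relational action of fmap\<close>

lemma closed_fmapv [simp]: "systemF R \<Longrightarrow> loose_below 0 (fmapv P R)"
  by (induct R arbitrary: P) (auto simp: comp_t_def)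

lemma closed_fmap [simp]: "systemF R \<Longrightarrow> loose_below 0 (fmap X R)"
  by (simp add: fmap_def)

lemma conv_fmapv_Arr:
  assumes "systemF R1" "systemF R2"
  shows "conv (App (App (App (fmapv P (Arr R1 R2)) g) h) x)
              (App (App (fmapv P R2) g) (App h (App (App (fmapv P R1) g) x)))"
proof -
  have "conv (App (App (fmapv P (Arr R1 R2)) g) h)
             (comp_t (App (fmapv P R2) g) (comp_t h (App (fmapv P R1) g)))"
    using assms by simp (rule conv_beta2, simp)
  then have "conv (App (App (App (fmapv P (Arr R1 R2)) g) h) x)
                  (App (comp_t (App (fmapv P R2) g) (comp_t h (App (fmapv P R1) g))) x)"
    by (rule conv_appL)
  also have "conv \<dots> (App (App (fmapv P R2) g) (App h (App (App (fmapv P R1) g) x)))"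
    by (meson conv_comp_t conv_appR conv_trans)
  finally show ?thesis .
qed

lemma conv_fmapv_All:
  "systemF R \<Longrightarrow> conv (App (fmapv P (All Y R)) g) (App (fmapv (P(Y := False)) R) g)"
  by simp (rule conv_beta, simp)

lemma conv_fmapv_identity:
  assumes "systemF R" and "\<And>Y. P Y \<Longrightarrow> conv g I_t"
  shows "conv (App (fmapv P R) g) I_t"
  using assms
proof (induct R arbitrary: P)
  case (TVar Y)
  then show ?case
    by (cases "P Y") (auto intro: conv_K conv_trans[OF conv_I])
next
  case (Arr R1 R2)
  then have id1: "conv (App (fmapv P R1) g) I_t" and id2: "conv (App (fmapv P R2) g) I_t"
    by simp_all
  have "conv (App (App (fmapv P (Arr R1 R2)) g) h) h" for h
  proof (rule conv_ext)
    fix x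
    have "conv (App (App (App (fmapv P (Arr R1 R2)) g) h) x)
               (App (App (fmapv P R2) g) (App h (App (App (fmapv P R1) g) x)))"
      using Arr.prems(1) by (intro conv_fmapv_Arr) simp_all
    also have "conv \<dots> (App h x)"
      using id1 id2 by (meson conv_I conv_appL conv_appR conv_trans)
    finally show "conv (App (App (App (fmapv P (Arr R1 R2)) g) h) x) (App h x)" .
  qed
  then show ?case
    by (meson conv_I conv_ext conv_sym conv_trans)
next
  case (All Y R)
  then have "conv (App (fmapv (P(Y := False)) R) g) I_t"
    by (metis fun_upd_apply systemF.simps(3))
  then show ?case
    using All.prems conv_fmapv_All conv_trans by fastforce
qed simp_all

lemma arrow_rel_fmapv_Arr:
  assumes "systemF R1" "systemF R2" "be_closed B2"
    and "arrow_rel B1 A1 (App (fmapv P R1) g) (App (fmapv P R1) g')"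
    and "arrow_rel A2 B2 (App (fmapv P R2) g) (App (fmapv P R2) g')"
  shows "arrow_rel (arrow_rel A1 A2) (arrow_rel B1 B2)
           (App (fmapv P (Arr R1 R2)) g) (App (fmapv P (Arr R1 R2)) g')"
proof (intro arrow_relI)
  fix h h' x x'
  assume "arrow_rel A1 A2 h h'" and "B1 x x'"
  then have "B2 (App (App (fmapv P R2) g) (App h (App (App (fmapv P R1) g) x)))
                (App (App (fmapv P R2) g') (App h' (App (App (fmapv P R1) g') x')))"
    using assms(4,5) by (meson arrow_relD)
  then show "B2 (App (App (App (fmapv P (Arr R1 R2)) g) h) x) (App (App (App (fmapv P (Arr R1 R2)) g') h') x')"
    using be_closedD[OF assms(3)] conv_fmapv_Arr[OF assms(1,2)] by blast
qed

lemma arrow_rel_fmapv_All: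
  assumes "systemF R" "\<forall>Z. be_closed (\<delta>2 Z)"
    and "\<And>r. be_closed r \<Longrightarrow> arrow_rel (interp (\<delta>1(Y := r)) R) (interp (\<delta>2(Y := r)) R)
           (App (fmapv (P(Y := False)) R) g) (App (fmapv (P(Y := False)) R) g')"
  shows "arrow_rel (interp \<delta>1 (All Y R)) (interp \<delta>2 (All Y R))
           (App (fmapv P (All Y R)) g) (App (fmapv P (All Y R)) g')"
proof (intro arrow_relI)
  fix a a'
  assume aa: "interp \<delta>1 (All Y R) a a'"
  show "interp \<delta>2 (All Y R) (App (App (fmapv P (All Y R)) g) a) (App (App (fmapv P (All Y R)) g') a')"
    unfolding interp.simps
  proof (intro allI impI)
    fix r
    assume r: "be_closed r"
    have "interp (\<delta>1(Y := r)) R a a'"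
      using aa r by simp
    then have "interp (\<delta>2(Y := r)) R (App (App (fmapv (P(Y := False)) R) g) a)
                                    (App (App (fmapv (P(Y := False)) R) g') a')"
      using assms(3)[OF r] by (rule arrow_relD[rotated])
    moreover have "be_closed (interp (\<delta>2(Y := r)) R)"
      using assms(2) r by (simp add: be_closed_interp)
    ultimately show "interp (\<delta>2(Y := r)) R (App (App (fmapv P (All Y R)) g) a)
                                          (App (App (fmapv P (All Y R)) g') a')"
      using be_closedD conv_appL[OF conv_fmapv_All[OF assms(1)]] by blast
  qed
qed

lemma arrow_rel_identity: "be_closed A \<Longrightarrow> conv u I_t \<Longrightarrow> conv u' I_t \<Longrightarrow> arrow_rel A A u u'"
  by (rule arrow_relI) (meson be_closedD conv_I conv_appL conv_trans)

lemma arrow_rel_fmap: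
  assumes "systemF R" "\<forall>Y. be_closed (\<gamma>1 Y)" "\<forall>Y. be_closed (\<gamma>2 Y)"
    and "\<forall>Y. Y \<noteq> X \<longrightarrow> \<gamma>1 Y = \<gamma>2 Y" and "arrow_rel (\<gamma>1 X) (\<gamma>2 X) g g'"
  shows "(occ True X R \<longrightarrow> arrow_rel (interp \<gamma>1 R) (interp \<gamma>2 R) (App (fmap X R) g) (App (fmap X R) g'))
       \<and> (occ False X R \<longrightarrow> arrow_rel (interp \<gamma>2 R) (interp \<gamma>1 R) (App (fmap X R) g) (App (fmap X R) g'))"
  using assms unfolding fmap_def
proof (induct R arbitrary: \<gamma>1 \<gamma>2)
  case (TVar Y)
  show ?case
  proof (cases "Y = X")
    case True
    have "arrow_rel (\<gamma>1 X) (\<gamma>2 X) (App I_t g) (App I_t g')"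
    proof (rule arrow_relI)
      fix a a'
      assume "\<gamma>1 X a a'"
      with TVar.prems(5) have "\<gamma>2 X (App g a) (App g' a')"
        by (rule arrow_relD)
      then show "\<gamma>2 X (App (App I_t g) a) (App (App I_t g') a')"
        using TVar.prems(3) be_closedD conv_I conv_appL by blast
    qed
    then show ?thesis
      using True by simp
  next
    case False
    then show ?thesis
      using TVar.prems(3,4) by (simp add: arrow_rel_identity conv_K)
  qed
next
  case (Arr R1 R2)
  let ?F = "\<lambda>R. App (fmapv (\<lambda>Y. Y = X) R)"
  have sF: "systemF R1" "systemF R2"
    using Arr.prems(1) by simp_all
  have IH1: "occ True X R1 \<Longrightarrow> arrow_rel (interp \<gamma>1 R1) (interp \<gamma>2 R1) (?F R1 g) (?F R1 g')"
    "occ False X R1 \<Longrightarrow> arrow_rel (interp \<gamma>2 R1) (interp \<gamma>1 R1) (?F R1 g) (?F R1 g')"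
    using Arr.hyps(1)[OF sF(1) Arr.prems(2-5)] by simp_all
  have IH2: "occ True X R2 \<Longrightarrow> arrow_rel (interp \<gamma>1 R2) (interp \<gamma>2 R2) (?F R2 g) (?F R2 g')"
    "occ False X R2 \<Longrightarrow> arrow_rel (interp \<gamma>2 R2) (interp \<gamma>1 R2) (?F R2 g) (?F R2 g')"
    using Arr.hyps(2)[OF sF(2) Arr.prems(2-5)] by simp_all
  have "be_closed (interp \<gamma>1 R2)" "be_closed (interp \<gamma>2 R2)"
    using Arr.prems(2,3) by (simp_all add: be_closed_interp)
  then show ?case
    unfolding interp_Arr occ.simps using sF IH1 IH2
    by (intro conjI impI arrow_rel_fmapv_Arr) simp_all
next
  case (All Y R)
  let ?P = "\<lambda>Z. Z = X"
  have sF: "systemF R"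
    using All.prems(1) by simp
  show ?case
  proof (cases "Y = X")
    case True
    (* X is shadowed: fmap acts as the identity and the interpretation ignores the value of X. *)
    have same: "interp \<gamma>2 (All Y R) = interp \<gamma>1 (All Y R)"
      using All.prems(4) True by (rule_tac interp_cong) auto
    have "conv (App (fmapv ?P (All Y R)) h) I_t" for h
    proof -
      have "conv (App (fmapv ?P (All Y R)) h) (App (fmapv (?P(Y := False)) R) h)"
        using sF by (rule conv_fmapv_All)
      also have "conv \<dots> I_t"
        using sF True by (intro conv_fmapv_identity) (simp_all split: if_splits)
      finally show ?thesis .
    qed
    moreover have "be_closed (interp \<gamma>1 (All Y R))"
      using All.prems(2) by (rule be_closed_interp)
    ultimately have "arrow_rel (interp \<gamma>1 (All Y R)) (interp \<gamma>1 (All Y R))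
                       (App (fmapv ?P (All Y R)) g) (App (fmapv ?P (All Y R)) g')"
      by (intro arrow_rel_identity)
    then show ?thesis
      unfolding same by blast
  next
    case False
    then have P_upd: "?P(Y := False) = ?P"
      by (auto simp: fun_eq_iff)
    have IH: "(occ True X R \<longrightarrow> arrow_rel (interp (\<gamma>1(Y := r)) R) (interp (\<gamma>2(Y := r)) R)
                  (App (fmapv (?P(Y := False)) R) g) (App (fmapv (?P(Y := False)) R) g'))
            \<and> (occ False X R \<longrightarrow> arrow_rel (interp (\<gamma>2(Y := r)) R) (interp (\<gamma>1(Y := r)) R)
                  (App (fmapv (?P(Y := False)) R) g) (App (fmapv (?P(Y := False)) R) g'))"
      if "be_closed r" for r
      unfolding P_upd using All.prems False that by (intro All.hyps) simp_all
    show ?thesis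
      using All.prems(2,3) IH False by (intro conjI impI arrow_rel_fmapv_All[OF sF]) simp_all
  qed
qed simp_all

lemma conv_in_t:
  "systemF R \<Longrightarrow> conv (App (App (in_t X R) a) f) (App f (App (App (fmap X R) (App fold_t f)) a))"
  unfolding in_t_def by (rule conv_beta2) simp

lemma Dind_le_Dparam:
  assumes "systemF R" and "occ True X R" and "\<forall>Y. be_closed (\<gamma> Y)"
  shows "interp \<gamma> (Dind X R) \<le> interp \<gamma> (Dparam X R)"
proof (rule predicate2I)
  fix t t'
  assume ind: "interp \<gamma> (Dind X R) t t'"
  show "interp \<gamma> (Dparam X R) t t'"
    unfolding interp_Dparam
  proof (intro allI impI)
    fix r f f'
    assume r: "be_closed r" and alg: "interp (\<gamma>(X := r)) (Arr R (TVar X)) f f'"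
    define r' where "r' = (\<lambda>u u'. r (App u f) (App u' f'))"
    have r': "be_closed r'"
      unfolding be_closed_def r'_def using be_closedD[OF r] conv_appL by blast
    have "arrow_rel r' r (App fold_t f) (App fold_t f')"
      unfolding r'_def using be_closedD[OF r] conv_fold by (blast intro: arrow_relI)
    then have fmap_fold: "arrow_rel (interp (\<gamma>(X := r')) R) (interp (\<gamma>(X := r)) R)
        (App (fmap X R) (App fold_t f)) (App (fmap X R) (App fold_t f'))"
      using arrow_rel_fmap[of R "\<gamma>(X := r')" "\<gamma>(X := r)" X] assms r r' by simp
    have "interp (\<gamma>(X := r')) (Arr R (TVar X)) (in_t X R) (in_t X R)"
      unfolding interp_Arr
    proof (rule arrow_relI)
      fix a a'
      assume "interp (\<gamma>(X := r')) R a a'"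
      then have "r (App f (App (App (fmap X R) (App fold_t f)) a))
                   (App f' (App (App (fmap X R) (App fold_t f')) a'))"
        using fmap_fold alg by (simp add: arrow_relD)
      then show "interp (\<gamma>(X := r')) (TVar X) (App (in_t X R) a) (App (in_t X R) a')"
        unfolding r'_def using be_closedD[OF r] conv_in_t[OF assms(1)] by simp
    qed
    then have "r' t t'"
      using ind r' unfolding interp_Dind[OF assms(3)] by blast
    then show "r (App t f) (App t' f')"
      by (simp add: r'_def)
  qed
qed

lemma Dparam_le_conv:
  assumes "fv R \<subseteq> {X}" and "forallp True R"
  shows "interp \<gamma> (Dparam X R) \<le> conv"
proof -
  have "fv (Dparam X R) = {}" and "forallp True (Dparam X R)"
    using assms by (auto simp: Dparam_def)
  then show ?thesis
    using identity_extension[of "Dparam X R" \<gamma>] by blast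
qed

lemma conv_App_in_t_if_Dparam:
  assumes "systemF R" "fv R \<subseteq> {X}" "occ True X R" "forallp True R" "\<forall>Y. be_closed (\<gamma> Y)"
    and "interp \<gamma> (Dparam X R) t t'"
  shows "conv (App t (in_t X R)) t'"
proof (rule conv_ext)
  fix f
  define G where "G = (\<lambda>u u'. conv (App u f) u')"
  have G: "be_closed G"
    unfolding be_closed_def G_def by (meson conv_appL conv_sym conv_trans)
  have "arrow_rel G conv (App fold_t f) I_t"
    unfolding G_def by (rule arrow_relI) (meson conv_I conv_fold conv_sym conv_trans)
  then have fmap_fold: "arrow_rel (interp (\<gamma>(X := G)) R) (interp (\<gamma>(X := conv)) R)
      (App (fmap X R) (App fold_t f)) (App (fmap X R) I_t)"
    using arrow_rel_fmap[of R "\<gamma>(X := G)" "\<gamma>(X := conv)" X] assms G be_closed_conv by simp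
  have "\<forall>Y\<in>fv R. (\<gamma>(X := conv)) Y = conv"
    using assms(2) by auto
  then have ie: "interp (\<gamma>(X := conv)) R \<le> conv"
    using identity_extension assms(4) by blast
  have fmap_I: "conv (App (App (fmap X R) I_t) a) a" for a
    using conv_fmapv_identity[OF assms(1), of _ I_t] unfolding fmap_def
    by (meson conv_I conv_appL conv_trans conv_refl)
  have "interp (\<gamma>(X := G)) (Arr R (TVar X)) (in_t X R) f"
    unfolding interp_Arr
  proof (rule arrow_relI)
    fix a a'
    assume "interp (\<gamma>(X := G)) R a a'"
    then have "conv (App (App (fmap X R) (App fold_t f)) a) a'"
      using fmap_fold ie fmap_I by (meson arrow_relD conv_trans predicate2D)
    then show "interp (\<gamma>(X := G)) (TVar X) (App (in_t X R) a) (App f a')"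
      unfolding G_def using conv_trans[OF conv_in_t[OF assms(1)] conv_appR] by simp
  qed
  then have "G (App t (in_t X R)) (App t' f)"
    using assms(6) G unfolding interp_Dparam by blast
  then show "conv (App (App t (in_t X R)) f) (App t' f)"
    by (simp add: G_def)
qed

lemma Dparam_le_Dind:
  assumes "systemF R" "fv R \<subseteq> {X}" "occ True X R" "forallp True R" "\<forall>Y. be_closed (\<gamma> Y)"
  shows "interp \<gamma> (Dparam X R) \<le> interp \<gamma> (Dind X R)"
proof (rule predicate2I)
  fix t t'
  assume param: "interp \<gamma> (Dparam X R) t t'"
  have tt': "conv t t'"
    using predicate2D[OF Dparam_le_conv[OF assms(2,4)] param] .
  have t_in: "conv (App t (in_t X R)) t'"
    using conv_App_in_t_if_Dparam[OF assms param] .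
  have eq: "conv t (App t (in_t X R))" "conv t' (App t' (in_t X R))"
    using tt' t_in by (meson conv_appL conv_sym conv_trans)+
  show "interp \<gamma> (Dind X R) t t'"
    unfolding interp_Dind[OF assms(5)]
  proof (intro allI impI)
    fix r
    assume "be_closed r" and "interp (\<gamma>(X := r)) (Arr R (TVar X)) (in_t X R) (in_t X R)"
    then have "r (App t (in_t X R)) (App t' (in_t X R))"
      using param unfolding interp_Dparam by blast
    then show "r t t'"
      using be_closedD[OF \<open>be_closed r\<close>] eq by blast
  qed
qed

theorem mainTheorem2:
  fixes R :: rtype and X :: tyvar and \<gamma> :: "tyvar \<Rightarrow> dB \<Rightarrow> dB \<Rightarrow> bool"
  assumes "systemF R" and "fv R = {X}" and "occ True X R"
    and "\<forall>Y. be_closed (\<gamma> Y)"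
  shows "(\<forall>t t'. interp \<gamma> (Sub (Dind X R) (Dparam X R)) t t')
       \<and> (forallp True R \<longrightarrow> (\<forall>t t'. interp \<gamma> (Sub (Dparam X R) (Dind X R)) t t'))
       \<and> (forallp True R \<longrightarrow> (\<forall>t t'. interp \<gamma> (Simeq (Dind X R) (Dparam X R)) t t'))"
proof -
  have ind_param: "interp \<gamma> (Sub (Dind X R) (Dparam X R)) t t'" for t t'
    using Dind_le_Dparam[OF assms(1,3,4)] by (simp add: interp_Sub assms(4))
  moreover have param_ind: "interp \<gamma> (Sub (Dparam X R) (Dind X R)) t t'"
    if "forallp True R" for t t'
    using Dparam_le_Dind[OF assms(1) _ assms(3) that assms(4)] assms(2)
    by (simp add: interp_Sub assms(4))
  ultimately show ?thesis
    unfolding Simeq_def interp.simps by blast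
qed

end
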